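(* Let $n\ge1$ and let $\alpha_1,\dots,\alpha_n$ be pairwise distinct constants. Let $y_1(x),\dots,y_n(x)$, $w_1(x),\dots,w_n(x)$ be functions, with no $y_i$ identically zero, satisfying \[ 2y_iy''_i=(y'_i)^2+4(q-\alpha_i)y^2_i-w^2_i,\qquad w'_i=2y_i,\qquad i=1,\dots,n,\qquad q=x^2-2y_1-\dots-2y_n . \] Define the polynomials in $\lambda$ \[ a(\lambda)=(\lambda-\alpha_1)\cdots(\lambda-\alpha_n),\quad y(x,\lambda)=a(\lambda)\Bigl(1-\sum_{i=1}^n\frac{y_i}{\lambda-\alpha_i}\Bigr),\quad w(x,\lambda)=a(\lambda)\Bigl(2x-\sum_{i=1}^n\frac{w_i}{\lambda-\alpha_i}\Bigr). \] Then $y$ and $w$ satisfy \[ 2yy''=(y')^2+4(q-\lambda)y^2-w^2+c,\qquad w'=2y,\qquad c=4a(\lambda)b(\lambda), \] where $b(\lambda)=(\lambda-\beta_1)\cdots(\lambda-\beta_{n+1})$ is a polynomial with constant (i.e. independent of $x$) coefficients such that $\sum_{i=1}^n\alpha_i=\sum_{i=1}^{n+1}\beta_i$.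
   Context: Primes denote derivatives with respect to $x$; $\lambda$ is an auxiliary parameter independent of $x$. The system for $y_i,w_i$ arises from the system $\psi''_i=(q-\alpha_i-1)\psi_i$, $\varphi''_i=(q-\alpha_i+1)\varphi_i$, $q=x^2-2\sum_j\psi_j\varphi_j$ via $y_i=\psi_i\varphi_i$, $w_i=\psi_i\varphi'_i-\psi'_i\varphi_i$. *)

theory Defs
  imports "HOL-Analysis.Analysis"
begin

definition apoly :: "nat \<Rightarrow> (nat \<Rightarrow> complex) \<Rightarrow> complex \<Rightarrow> complex" where
  "apoly n \<alpha> l = (\<Prod>j<n. l - \<alpha> j)"

text \<open>a(lambda) / (lambda - alpha_i), written as the polynomial prod over j different from i.\<close>
definition aquot :: "nat \<Rightarrow> (nat \<Rightarrow> complex) \<Rightarrow> nat \<Rightarrow> complex \<Rightarrow> complex" where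
  "aquot n \<alpha> i l = (\<Prod>j\<in>{..<n} - {i}. l - \<alpha> j)"

text \<open>y(x,lambda) = a(lambda) (1 - sum_i y_i/(lambda-alpha_i)), as a polynomial in lambda.\<close>
definition Ypoly :: "nat \<Rightarrow> (nat \<Rightarrow> complex) \<Rightarrow> (nat \<Rightarrow> complex \<Rightarrow> complex) \<Rightarrow> complex \<Rightarrow> complex \<Rightarrow> complex" where
  "Ypoly n \<alpha> y x l = apoly n \<alpha> l - (\<Sum>i<n. y i x * aquot n \<alpha> i l)"

text \<open>w(x,lambda) = a(lambda) (2x - sum_i w_i/(lambda-alpha_i)), as a polynomial in lambda.\<close>
definition Wpoly :: "nat \<Rightarrow> (nat \<Rightarrow> complex) \<Rightarrow> (nat \<Rightarrow> complex \<Rightarrow> complex) \<Rightarrow> complex \<Rightarrow> complex \<Rightarrow> complex" where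
  "Wpoly n \<alpha> w x l = 2 * x * apoly n \<alpha> l - (\<Sum>i<n. w i x * aquot n \<alpha> i l)"

end

theory Submission
  imports Defs "HOL-Complex_Analysis.Complex_Analysis" "HOL-Computational_Algebra.Fundamental_Theorem_Algebra"
begin

(* Let R = 2 y y'' - (y'^2 + 4 (q - a) y^2 - w^2) be the residual of the equation with parameter a.
   When w' = 2 y, its derivative is 2 y (y''' - 2 q' y - 4 (q - a) y' + 2 w).  Since no y_i vanishes
   identically, each y_i therefore satisfies the linear third-order equation
   y''' = 2 q' y + 4 (q - alpha_i) y' - 2 w.  Because q' = 2 x - 2 sum y_i', the combinations
   y(x,lambda), w(x,lambda) satisfy the same equation with alpha_i replaced by lambda, so their
   residual c(lambda) does not depend on x.  As a polynomial in lambda, c vanishes at every alpha_i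
   (only the i-th term survives there), and c - 4 lambda a^2 has degree below 2n (the lambda^(2n)
   terms cancel because q = x^2 - 2 sum y_i).  Hence c = 4 a b with b monic of degree n + 1, and the
   lambda^n coefficient of b is that of lambda a, namely - sum alpha_i. *)

lemma degree_prod_linear_factors [simp]:
  "degree (\<Prod>j<m. [:- c j, 1:] :: 'a::idom poly) = m"
  by (simp add: degree_prod_sum_eq)

lemma coeff_prod_linear_factors_top [simp]:
  "coeff (\<Prod>j<m. [:- c j, 1:] :: 'a::idom poly) m = 1"
  using lead_coeff_prod[of "\<lambda>j. [:- c j, 1:]" "{..<m}"] by simp

lemma coeff_prod_linear_factors_subleading:
  "coeff (\<Prod>j<Suc m. [:- c j, 1:] :: 'a::idom poly) m = - (\<Sum>j<Suc m. c j)"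
proof (induction m)
  case (Suc m)
  define p where "p = (\<Prod>j<Suc m. [:- c j, 1:] :: 'a poly)"
  have "coeff p (Suc m) = 1"
    unfolding p_def by (rule coeff_prod_linear_factors_top)
  moreover have "(\<Prod>j<Suc (Suc m). [:- c j, 1:]) = [:- c (Suc m), 1:] * p"
    by (simp add: p_def mult.commute)
  moreover have "coeff p m = - (\<Sum>j<Suc m. c j)"
    unfolding p_def by (rule Suc.IH)
  ultimately show ?case
    by simp
qed simp

lemma prod_linear_factors_dvd:
  fixes p :: "'a::idom poly"
  assumes "finite S" and "\<And>a. a \<in> S \<Longrightarrow> poly p a = 0"
  shows "(\<Prod>a\<in>S. [:- a, 1:]) dvd p"
  using assms
proof (induction S rule: finite_induct)
  case (insert a S)
  then obtain r where r: "p = (\<Prod>a\<in>S. [:- a, 1:]) * r"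
    by (auto elim: dvdE)
  have "poly (\<Prod>a\<in>S. [:- a, 1:]) a \<noteq> 0"
    using insert(1,2) by (auto simp: poly_prod)
  moreover have "poly p a = 0"
    using insert.prems by simp
  ultimately have "[:- a, 1:] dvd r"
    using r by (simp add: poly_eq_0_iff_dvd [symmetric])
  then obtain s where "r = [:- a, 1:] * s"
    by (elim dvdE)
  with r insert(1,2) show ?case
    by (simp add: mult_ac del: mult_pCons_left mult_pCons_right)
qed simp

lemma monic_complex_poly_linear_factors:
  fixes b :: "complex poly"
  assumes "degree b = Suc m" and "lead_coeff b = 1"
  obtains \<beta> where "\<And>l. poly b l = (\<Prod>j<Suc m. l - \<beta> j)" and "(\<Sum>j<Suc m. \<beta> j) = - coeff b m"
proof -
  obtain \<beta> where "smult (lead_coeff b) (\<Prod>j<degree b. [:- \<beta> j, 1:]) = b"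
    by (rule complex_poly_decompose')
  then have b: "b = (\<Prod>j<Suc m. [:- \<beta> j, 1:])"
    using assms by simp
  show thesis
  proof (rule that)
    show "poly b l = (\<Prod>j<Suc m. l - \<beta> j)" for l
      by (simp add: b poly_prod del: prod.lessThan_Suc)
    show "(\<Sum>j<Suc m. \<beta> j) = - coeff b m"
      unfolding b coeff_prod_linear_factors_subleading by simp
  qed
qed

lemma coeff_cofactor_of_near_square:
  fixes A D :: "'a::field poly"
  assumes "A \<noteq> 0" and "c \<noteq> 0" and deg: "degree (A * D - smult c (pCons 0 (A\<^sup>2))) < 2 * degree A"
    and "degree A \<le> k"
  shows "coeff (smult (1 / c) D) k = coeff (pCons 0 A) k"
proof -
  define E where "E = D - smult c (pCons 0 A)"
  have "coeff E k = 0"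
  proof (cases "E = 0")
    case False
    have "A * D - smult c (pCons 0 (A\<^sup>2)) = A * E"
      by (simp add: E_def algebra_simps power2_eq_square)
    with deg False \<open>A \<noteq> 0\<close> have "degree A + degree E < 2 * degree A"
      by (simp add: degree_mult_eq)
    with \<open>degree A \<le> k\<close> show ?thesis
      by (intro coeff_eq_0) simp
  qed simp
  with \<open>c \<noteq> 0\<close> show ?thesis
    by (cases k) (simp_all add: E_def)
qed

definition apoly_poly :: "nat \<Rightarrow> (nat \<Rightarrow> complex) \<Rightarrow> complex poly" where
  "apoly_poly n \<alpha> = (\<Prod>j<n. [:- \<alpha> j, 1:])"

lemma poly_apoly_poly [simp]: "poly (apoly_poly n \<alpha>) l = apoly n \<alpha> l"
  by (simp add: apoly_poly_def apoly_def poly_prod)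

lemma poly_factor_through_roots:
  fixes P :: "complex poly"
  assumes inj: "inj_on \<alpha> {..<n}" and c: "c \<noteq> 0"
    and roots: "\<And>k. k < n \<Longrightarrow> poly P (\<alpha> k) = 0"
    and deg: "degree (P - smult c (pCons 0 ((apoly_poly n \<alpha>)\<^sup>2))) < 2 * n"
  obtains \<beta> where "(\<Sum>j<n. \<alpha> j) = (\<Sum>j<n+1. \<beta> j)"
    and "\<And>l. poly P l = c * apoly n \<alpha> l * (\<Prod>j<n+1. l - \<beta> j)"
proof -
  define A where "A = apoly_poly n \<alpha>"
  obtain m where n: "n = Suc m"
    using deg by (cases n) auto
  have A: "A \<noteq> 0" "degree A = n" "coeff A n = 1" "coeff A m = - (\<Sum>j<n. \<alpha> j)"
    unfolding A_def apoly_poly_def n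
    by (simp_all add: coeff_prod_linear_factors_subleading del: prod.lessThan_Suc sum.lessThan_Suc)
  have "A = (\<Prod>a\<in>\<alpha> ` {..<n}. [:- a, 1:])"
    unfolding A_def apoly_poly_def using inj by (simp add: prod.reindex)
  also have "\<dots> dvd P"
    using roots by (intro prod_linear_factors_dvd) auto
  finally obtain D where D: "P = A * D"
    by (elim dvdE)
  define b where "b = smult (1 / c) D"
  have coeff_b: "coeff b k = coeff (pCons 0 A) k" if "n \<le> k" for k
    unfolding b_def using A that deg D c by (intro coeff_cofactor_of_near_square) (simp_all add: A_def)
  have deg_b: "degree b = Suc n"
  proof (rule antisym)
    show "degree b \<le> Suc n"
      using coeff_b A by (intro degree_le) (auto simp: coeff_eq_0)
    show "Suc n \<le> degree b"
      using coeff_b A by (intro le_degree) simp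
  qed
  moreover have "lead_coeff b = 1"
    using deg_b coeff_b A by simp
  ultimately obtain \<beta> where \<beta>: "\<And>l. poly b l = (\<Prod>j<Suc n. l - \<beta> j)"
    and sum_\<beta>: "(\<Sum>j<Suc n. \<beta> j) = - coeff b n"
    using monic_complex_poly_linear_factors by blast
  show thesis
  proof (rule that)
    show "(\<Sum>j<n. \<alpha> j) = (\<Sum>j<n+1. \<beta> j)"
      using sum_\<beta> coeff_b A n by simp
    show "poly P l = c * apoly n \<alpha> l * (\<Prod>j<n+1. l - \<beta> j)" for l
      using \<beta>[of l] c by (simp add: D b_def A_def field_simps del: prod.lessThan_Suc)
  qed
qed

definition ode_residual :: "'a::comm_ring_1 \<Rightarrow> 'a \<Rightarrow> 'a \<Rightarrow> 'a \<Rightarrow> 'a \<Rightarrow> 'a \<Rightarrow> 'a" where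
  "ode_residual q a y y' y'' w = 2 * y * y'' - (y'\<^sup>2 + 4 * (q - a) * y\<^sup>2 - w\<^sup>2)"

lemma ode_residual_eq_iff:
  "ode_residual q a y y' y'' w = c \<longleftrightarrow> 2 * y * y'' = y'\<^sup>2 + 4 * (q - a) * y\<^sup>2 - w\<^sup>2 + c"
  by (auto simp: ode_residual_def algebra_simps)

lemma ode_residual_scale:
  "ode_residual q a (t * y) (t * y') (t * y'') (t * w) = t\<^sup>2 * ode_residual q a y y' y'' w"
  by (simp add: ode_residual_def power2_eq_square algebra_simps)

lemma has_field_derivative_ode_residual:
  assumes "(f has_field_derivative f1 x) (at x)" and "(f1 has_field_derivative f2 x) (at x)"
    and "(f2 has_field_derivative f3) (at x)" and "(w has_field_derivative 2 * f x) (at x)"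
    and "(Q has_field_derivative Q1) (at x)"
  shows "((\<lambda>x. ode_residual (Q x) a (f x) (f1 x) (f2 x) (w x)) has_field_derivative
           2 * f x * (f3 - (2 * Q1 * f x + 4 * (Q x - a) * f1 x - 2 * w x))) (at x)"
  unfolding ode_residual_def using assms
  by (auto intro!: derivative_eq_intros simp: power2_eq_square algebra_simps)

lemma holomorphic_mult_eq_0_imp_eq_0:
  assumes U: "open U" "connected U" and f: "f holomorphic_on U" "\<exists>z\<in>U. f z \<noteq> 0"
    and g: "continuous_on U g" and fg: "\<And>z. z \<in> U \<Longrightarrow> f z * g z = 0" and "x \<in> U"
  shows "g x = 0"
proof (rule ccontr)
  assume "g x \<noteq> 0"
  define V where "V = g -` (- {0}) \<inter> U"
  have "open V"
    unfolding V_def using g U(1) by (simp add: continuous_on_open_vimage open_Compl)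
  have "f z = 0" if "z \<in> U" for z
  proof (rule analytic_continuation_open[of V U f "\<lambda>_. 0"])
    show "V \<noteq> {}" "V \<subseteq> U"
      using \<open>g x \<noteq> 0\<close> \<open>x \<in> U\<close> by (auto simp: V_def)
    show "f z = 0" if "z \<in> V" for z
      using fg[of z] that by (auto simp: V_def)
  qed (use U f \<open>open V\<close> that in auto)
  with f(2) show False
    by blast
qed

lemma ode_third_derivative:
  fixes f f1 f2 w Q Q1 :: "complex \<Rightarrow> complex"
  assumes U: "open U" "connected U" and nonzero: "\<exists>x\<in>U. f x \<noteq> 0"
    and df: "\<And>x. x \<in> U \<Longrightarrow> (f has_field_derivative f1 x) (at x)"
    and df1: "\<And>x. x \<in> U \<Longrightarrow> (f1 has_field_derivative f2 x) (at x)"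
    and dw: "\<And>x. x \<in> U \<Longrightarrow> (w has_field_derivative 2 * f x) (at x)"
    and dQ: "\<And>x. x \<in> U \<Longrightarrow> (Q has_field_derivative Q1 x) (at x)"
    and res: "\<And>x. x \<in> U \<Longrightarrow> ode_residual (Q x) a (f x) (f1 x) (f2 x) (w x) = 0"
    and x: "x \<in> U"
  shows "(f2 has_field_derivative 2 * Q1 x * f x + 4 * (Q x - a) * f1 x - 2 * w x) (at x)"
proof -
  define f3 where "f3 = deriv (deriv f1)"
  define G where "G x = 2 * Q1 x * f x + 4 * (Q x - a) * f1 x - 2 * w x" for x
  have hol: "f holomorphic_on U" "f1 holomorphic_on U" "w holomorphic_on U" "Q holomorphic_on U"
    unfolding holomorphic_on_open[OF U(1)] using df df1 dw dQ by blast+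
  have df2: "(f2 has_field_derivative f3 z) (at z)" if "z \<in> U" for z
  proof (rule has_field_derivative_transform_within_open[OF _ U(1) that])
    show "(deriv f1 has_field_derivative f3 z) (at z)"
      unfolding f3_def using hol(2) U(1) that by (intro holomorphic_derivI holomorphic_deriv)
    show "deriv f1 y = f2 y" if "y \<in> U" for y
      using df1[OF that] by (rule DERIV_imp_deriv)
  qed
  have prod_eq_0: "f z * (f3 z - G z) = 0" if z: "z \<in> U" for z
  proof -
    have "((\<lambda>x. ode_residual (Q x) a (f x) (f1 x) (f2 x) (w x)) has_field_derivative
        2 * f z * (f3 z - G z)) (at z)"
      unfolding G_def using z by (intro has_field_derivative_ode_residual df df1 df2 dw dQ)
    moreover have "((\<lambda>x. ode_residual (Q x) a (f x) (f1 x) (f2 x) (w x)) has_field_derivative 0) (at z)"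
      by (rule has_field_derivative_transform_within_open[OF DERIV_const U(1) z]) (simp add: res)
    ultimately show ?thesis
      using DERIV_unique by fastforce
  qed
  have "continuous_on U Q1"
  proof (rule continuous_on_cong[THEN iffD1])
    show "continuous_on U (deriv Q)"
      using hol(4) U(1) by (intro holomorphic_on_imp_continuous_on holomorphic_deriv)
  qed (use dQ DERIV_imp_deriv in auto)
  moreover have "f3 holomorphic_on U"
    unfolding f3_def using hol(2) U(1) by (intro holomorphic_deriv)
  ultimately have "continuous_on U (\<lambda>z. f3 z - G z)"
    unfolding G_def using hol by (intro continuous_intros) (auto intro: holomorphic_on_imp_continuous_on)
  then have "f3 x - G x = 0"
    using holomorphic_mult_eq_0_imp_eq_0[OF U hol(1) nonzero _ prod_eq_0 x] by blast
  with df2[OF x] show ?thesis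
    by (simp add: G_def)
qed

(* aquot_sum n alpha f x l is a(l) * sum_i f_i(x) / (l - alpha_i), written without division. *)
definition aquot_sum ::
    "nat \<Rightarrow> (nat \<Rightarrow> complex) \<Rightarrow> (nat \<Rightarrow> complex \<Rightarrow> complex) \<Rightarrow> complex \<Rightarrow> complex \<Rightarrow> complex" where
  "aquot_sum n \<alpha> f x l = (\<Sum>i<n. f i x * aquot n \<alpha> i l)"

definition aquot_sum_poly ::
    "nat \<Rightarrow> (nat \<Rightarrow> complex) \<Rightarrow> (nat \<Rightarrow> complex \<Rightarrow> complex) \<Rightarrow> complex \<Rightarrow> complex poly" where
  "aquot_sum_poly n \<alpha> f x = (\<Sum>i<n. smult (f i x) (\<Prod>j\<in>{..<n} - {i}. [:- \<alpha> j, 1:]))"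

lemma Ypoly_aquot_sum: "Ypoly n \<alpha> y x l = apoly n \<alpha> l - aquot_sum n \<alpha> y x l"
  by (simp add: Ypoly_def aquot_sum_def)

lemma Wpoly_aquot_sum: "Wpoly n \<alpha> w x l = 2 * x * apoly n \<alpha> l - aquot_sum n \<alpha> w x l"
  by (simp add: Wpoly_def aquot_sum_def)

lemma poly_aquot_sum_poly [simp]: "poly (aquot_sum_poly n \<alpha> f x) l = aquot_sum n \<alpha> f x l"
  by (simp add: aquot_sum_poly_def aquot_sum_def aquot_def poly_sum poly_prod)

lemma degree_aquot_sum_poly: "degree (aquot_sum_poly n \<alpha> f x) \<le> n - 1"
  unfolding aquot_sum_poly_def
  by (intro degree_sum_le order.trans[OF degree_smult_le]) (simp_all add: degree_prod_sum_eq)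

lemma aquot_mult_linear: "i < n \<Longrightarrow> (l - \<alpha> i) * aquot n \<alpha> i l = apoly n \<alpha> l"
  unfolding aquot_def apoly_def by (subst prod.remove[of "{..<n}" i]) auto

lemma apoly_eq_0: "k < n \<Longrightarrow> apoly n \<alpha> (\<alpha> k) = 0"
  unfolding apoly_def by (intro prod_zero) auto

lemma aquot_eq_0: "inj_on \<alpha> {..<n} \<Longrightarrow> i < n \<Longrightarrow> k < n \<Longrightarrow> i \<noteq> k \<Longrightarrow> aquot n \<alpha> i (\<alpha> k) = 0"
  unfolding aquot_def by (intro prod_zero) (auto dest: inj_onD)

lemma aquot_sum_at_root:
  assumes "inj_on \<alpha> {..<n}" and "k < n"
  shows "aquot_sum n \<alpha> f x (\<alpha> k) = f k x * aquot n \<alpha> k (\<alpha> k)"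
proof -
  have "aquot_sum n \<alpha> f x (\<alpha> k) = (\<Sum>i\<in>{k}. f i x * aquot n \<alpha> i (\<alpha> k))"
    unfolding aquot_sum_def using assms by (intro sum.mono_neutral_right) (auto simp: aquot_eq_0)
  then show ?thesis
    by simp
qed

lemma mult_aquot_sum:
  "l * aquot_sum n \<alpha> f x l = (\<Sum>i<n. f i x) * apoly n \<alpha> l + aquot_sum n \<alpha> (\<lambda>i x. \<alpha> i * f i x) x l"
proof -
  have "l * aquot_sum n \<alpha> f x l = (\<Sum>i<n. f i x * ((l - \<alpha> i) * aquot n \<alpha> i l + \<alpha> i * aquot n \<alpha> i l))"
    by (simp add: aquot_sum_def sum_distrib_left algebra_simps)
  also have "\<dots> = (\<Sum>i<n. f i x * (apoly n \<alpha> l + \<alpha> i * aquot n \<alpha> i l))"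
    by (intro sum.cong) (simp_all add: aquot_mult_linear)
  finally show ?thesis
    by (simp add: aquot_sum_def sum.distrib sum_distrib_left sum_distrib_right algebra_simps)
qed

lemma ode_residual_combination_poly_eq:
  fixes n :: nat and \<alpha> :: "nat \<Rightarrow> complex" and y y' y'' w :: "nat \<Rightarrow> complex \<Rightarrow> complex"
    and q x :: complex
  assumes q: "q = x\<^sup>2 - 2 * (\<Sum>i<n. y i x)"
  defines "A \<equiv> apoly_poly n \<alpha>" and "L \<equiv> \<lambda>f. aquot_sum_poly n \<alpha> f x"
  shows "ode_residual [:q:] [:0, 1:] (A - L y) (- L y') (- L y'') (smult (2 * x) A - L w)
           - smult 4 (pCons 0 (A\<^sup>2))
       = A * (smult (8 * q) (L y) - smult 8 (L (\<lambda>i x. \<alpha> i * y i x)) - smult (4 * x) (L w) - smult 2 (L y''))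
         + (smult 4 (pCons 0 (L y)) + smult 2 (L y'') - smult (4 * q) (L y)) * L y
         - (L y')\<^sup>2 + (L w)\<^sup>2"
    (is "?lhs = ?rhs")
proof (rule poly_eq_poly_eq_iff[THEN iffD1, OF ext])
  fix l
  have "l * poly (L y) l = (\<Sum>i<n. y i x) * poly A l + poly (L (\<lambda>i x. \<alpha> i * y i x)) l"
    by (simp add: A_def L_def mult_aquot_sum)
  with q show "poly ?lhs l = poly ?rhs l"
    unfolding ode_residual_def by simp algebra
qed

lemma ode_residual_combination_poly:
  fixes y y' y'' w :: "nat \<Rightarrow> complex \<Rightarrow> complex" and q x :: complex
  assumes n: "n \<ge> 1" and q: "q = x\<^sup>2 - 2 * (\<Sum>i<n. y i x)"
  obtains P :: "complex poly" where
    "\<And>l. poly P l = ode_residual q l (Ypoly n \<alpha> y x l) (- aquot_sum n \<alpha> y' x l)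
                       (- aquot_sum n \<alpha> y'' x l) (Wpoly n \<alpha> w x l)"
    and "degree (P - smult 4 (pCons 0 ((apoly_poly n \<alpha>)\<^sup>2))) < 2 * n"
proof -
  let ?A = "apoly_poly n \<alpha>" and ?L = "\<lambda>f. aquot_sum_poly n \<alpha> f x"
  define P where "P = ode_residual [:q:] [:0, 1:] (?A - ?L y) (- ?L y') (- ?L y'') (smult (2 * x) ?A - ?L w)"
  have deg_A: "degree ?A = n"
    by (simp add: apoly_poly_def)
  have deg_mult: "degree (p * r) \<le> 2 * n - 1" if "degree p \<le> n" "degree r \<le> n - 1" for p r :: "complex poly"
    using degree_mult_le[of p r] that n by linarith
  have deg_L: "degree (?L f) \<le> n - 1" "degree (?L f) \<le> n" "Suc (degree (?L f)) \<le> n" for f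
    using degree_aquot_sum_poly[of n \<alpha> f x] n by linarith+
  have "degree (P - smult 4 (pCons 0 (?A\<^sup>2))) \<le> 2 * n - 1"
    unfolding P_def ode_residual_combination_poly_eq[where y = y and x = x, OF q] unfolding power2_eq_square
    by (intro degree_add_le degree_diff_le deg_mult degree_smult_le[THEN order.trans]
        order.trans[OF degree_pCons_le] deg_L) (simp_all add: deg_A)
  with n have "degree (P - smult 4 (pCons 0 (?A\<^sup>2))) < 2 * n"
    by linarith
  then show thesis
    by (rule that[rotated]) (simp add: P_def Ypoly_aquot_sum Wpoly_aquot_sum ode_residual_def)
qed

lemma ode_residual_combination_factor:
  fixes y y' y'' w :: "nat \<Rightarrow> complex \<Rightarrow> complex" and q x :: complex
  assumes n: "n \<ge> 1" and inj: "inj_on \<alpha> {..<n}" and q: "q = x\<^sup>2 - 2 * (\<Sum>i<n. y i x)"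
    and res: "\<And>i. i < n \<Longrightarrow> ode_residual q (\<alpha> i) (y i x) (y' i x) (y'' i x) (w i x) = 0"
  obtains \<beta> where "(\<Sum>i<n. \<alpha> i) = (\<Sum>j<n+1. \<beta> j)"
    and "\<And>l. ode_residual q l (Ypoly n \<alpha> y x l) (- aquot_sum n \<alpha> y' x l)
                 (- aquot_sum n \<alpha> y'' x l) (Wpoly n \<alpha> w x l)
               = 4 * apoly n \<alpha> l * (\<Prod>j<n+1. l - \<beta> j)"
proof -
  obtain P where P: "\<And>l. poly P l = ode_residual q l (Ypoly n \<alpha> y x l) (- aquot_sum n \<alpha> y' x l)
                       (- aquot_sum n \<alpha> y'' x l) (Wpoly n \<alpha> w x l)"
    and deg: "degree (P - smult 4 (pCons 0 ((apoly_poly n \<alpha>)\<^sup>2))) < 2 * n"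
    using ode_residual_combination_poly[where y = y and x = x, OF n q] by blast
  have "poly P (\<alpha> k) = 0" if k: "k < n" for k
  proof -
    define t where "t = - aquot n \<alpha> k (\<alpha> k)"
    have "poly P (\<alpha> k) = ode_residual q (\<alpha> k) (t * y k x) (t * y' k x) (t * y'' k x) (t * w k x)"
      using inj k
      by (simp add: P t_def Ypoly_aquot_sum Wpoly_aquot_sum aquot_sum_at_root apoly_eq_0 mult.commute)
    also have "\<dots> = 0"
      using res[OF k] by (simp add: ode_residual_scale)
    finally show ?thesis .
  qed
  then obtain \<beta> where "(\<Sum>i<n. \<alpha> i) = (\<Sum>j<n+1. \<beta> j)"
    and "\<And>l. poly P l = 4 * apoly n \<alpha> l * (\<Prod>j<n+1. l - \<beta> j)"
    using poly_factor_through_roots[OF inj, of 4 P] deg by auto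
  then show thesis
    by (intro that[of \<beta>]) (simp_all add: P[symmetric])
qed

lemma has_field_derivative_aquot_sum:
  assumes "\<And>i. i < n \<Longrightarrow> (f i has_field_derivative f' i x) (at x)"
  shows "((\<lambda>x. aquot_sum n \<alpha> f x l) has_field_derivative aquot_sum n \<alpha> f' x l) (at x)"
  unfolding aquot_sum_def using assms by (auto intro!: derivative_eq_intros)

lemma has_field_derivative_Ypoly:
  assumes "\<And>i. i < n \<Longrightarrow> (y i has_field_derivative y' i x) (at x)"
  shows "((\<lambda>x. Ypoly n \<alpha> y x l) has_field_derivative - aquot_sum n \<alpha> y' x l) (at x)"
  unfolding Ypoly_aquot_sum using assms by (auto intro!: derivative_eq_intros has_field_derivative_aquot_sum)

lemma has_field_derivative_Wpoly:
  assumes "\<And>i. i < n \<Longrightarrow> (w i has_field_derivative 2 * y i x) (at x)"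
  shows "((\<lambda>x. Wpoly n \<alpha> w x l) has_field_derivative 2 * Ypoly n \<alpha> y x l) (at x)"
proof -
  have "((\<lambda>x. Wpoly n \<alpha> w x l) has_field_derivative
      2 * apoly n \<alpha> l - aquot_sum n \<alpha> (\<lambda>i x. 2 * y i x) x l) (at x)"
    unfolding Wpoly_aquot_sum using assms by (auto intro!: derivative_eq_intros has_field_derivative_aquot_sum)
  then show ?thesis
    by (simp add: Ypoly_aquot_sum aquot_sum_def sum_distrib_left algebra_simps)
qed

lemma aquot_sum_third_order:
  assumes q': "q' x = 2 * x - 2 * (\<Sum>i<n. y' i x)"
  shows "- aquot_sum n \<alpha> (\<lambda>i x. 2 * q' x * y i x + 4 * (q x - \<alpha> i) * y' i x - 2 * w i x) x l
    = 2 * q' x * Ypoly n \<alpha> y x l + 4 * (q x - l) * (- aquot_sum n \<alpha> y' x l) - 2 * Wpoly n \<alpha> w x l"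
proof -
  have "aquot_sum n \<alpha> (\<lambda>i x. 2 * q' x * y i x + 4 * (q x - \<alpha> i) * y' i x - 2 * w i x) x l
      = 2 * q' x * aquot_sum n \<alpha> y x l + 4 * q x * aquot_sum n \<alpha> y' x l
        - 4 * aquot_sum n \<alpha> (\<lambda>i x. \<alpha> i * y' i x) x l - 2 * aquot_sum n \<alpha> w x l"
    by (simp add: aquot_sum_def sum.distrib sum_subtractf sum_distrib_left algebra_simps)
  also have "aquot_sum n \<alpha> (\<lambda>i x. \<alpha> i * y' i x) x l
      = l * aquot_sum n \<alpha> y' x l - (\<Sum>i<n. y' i x) * apoly n \<alpha> l"
    by (simp add: mult_aquot_sum)
  finally show ?thesis
    unfolding Ypoly_aquot_sum Wpoly_aquot_sum q' by (simp add: algebra_simps)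
qed

context
  fixes n :: nat and \<alpha> :: "nat \<Rightarrow> complex" and U :: "complex set"
    and y y' y'' w :: "nat \<Rightarrow> complex \<Rightarrow> complex" and q :: "complex \<Rightarrow> complex"
  assumes U: "open U" "connected U"
    and dq: "\<And>x. x \<in> U \<Longrightarrow> (q has_field_derivative 2 * x - 2 * (\<Sum>i<n. y' i x)) (at x)"
    and dy: "\<And>i x. i < n \<Longrightarrow> x \<in> U \<Longrightarrow> (y i has_field_derivative y' i x) (at x)"
    and ddy: "\<And>i x. i < n \<Longrightarrow> x \<in> U \<Longrightarrow> (y' i has_field_derivative y'' i x) (at x)"
    and dw: "\<And>i x. i < n \<Longrightarrow> x \<in> U \<Longrightarrow> (w i has_field_derivative 2 * y i x) (at x)"
    and dddy: "\<And>i x. i < n \<Longrightarrow> x \<in> U \<Longrightarrow> (y'' i has_field_derivative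
                 2 * (2 * x - 2 * (\<Sum>j<n. y' j x)) * y i x + 4 * (q x - \<alpha> i) * y' i x - 2 * w i x) (at x)"
begin

lemma combination_ode_residual_constant:
  assumes x: "x \<in> U" and x0: "x0 \<in> U"
  shows "ode_residual (q x) l (Ypoly n \<alpha> y x l) (- aquot_sum n \<alpha> y' x l)
           (- aquot_sum n \<alpha> y'' x l) (Wpoly n \<alpha> w x l)
       = ode_residual (q x0) l (Ypoly n \<alpha> y x0 l) (- aquot_sum n \<alpha> y' x0 l)
           (- aquot_sum n \<alpha> y'' x0 l) (Wpoly n \<alpha> w x0 l)"
proof -
  define q' where "q' x = 2 * x - 2 * (\<Sum>i<n. y' i x)" for x
  have dq': "(q has_field_derivative q' z) (at z)" if "z \<in> U" for z
    using dq that by (simp add: q'_def)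
  have dddy': "(y'' i has_field_derivative 2 * q' z * y i z + 4 * (q z - \<alpha> i) * y' i z - 2 * w i z) (at z)"
    if "i < n" "z \<in> U" for i z
    using dddy that by (simp add: q'_def)
  define F where "F x = ode_residual (q x) l (Ypoly n \<alpha> y x l) (- aquot_sum n \<alpha> y' x l)
                          (- aquot_sum n \<alpha> y'' x l) (Wpoly n \<alpha> w x l)" for x
  have "(F has_field_derivative 0) (at z)" if z: "z \<in> U" for z
  proof -
    have "(F has_field_derivative 2 * Ypoly n \<alpha> y z l *
        (- aquot_sum n \<alpha> (\<lambda>i x. 2 * q' x * y i x + 4 * (q x - \<alpha> i) * y' i x - 2 * w i x) z l
         - (2 * q' z * Ypoly n \<alpha> y z l + 4 * (q z - l) * (- aquot_sum n \<alpha> y' z l) - 2 * Wpoly n \<alpha> w z l))) (at z)"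
      unfolding F_def using z dq' dy ddy dddy' dw
      by (intro has_field_derivative_ode_residual has_field_derivative_Ypoly has_field_derivative_Wpoly
          DERIV_minus has_field_derivative_aquot_sum) simp_all
    then show ?thesis
      by (simp only: aquot_sum_third_order[OF q'_def]) simp
  qed
  then have "F constant_on U"
    using U by (intro has_field_derivative_0_imp_constant_on) auto
  then show ?thesis
    using x x0 unfolding constant_on_def F_def by metis
qed

lemma combination_solves_ode:
  assumes x0: "x0 \<in> U"
  shows "\<exists>Y' Y''. \<forall>x\<in>U.
     ((\<lambda>x. Ypoly n \<alpha> y x l) has_field_derivative Y' x) (at x) \<and>
     (Y' has_field_derivative Y'' x) (at x) \<and>
     ((\<lambda>x. Wpoly n \<alpha> w x l) has_field_derivative 2 * Ypoly n \<alpha> y x l) (at x) \<and>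
     2 * Ypoly n \<alpha> y x l * Y'' x
       = (Y' x)\<^sup>2 + 4 * (q x - l) * (Ypoly n \<alpha> y x l)\<^sup>2 - (Wpoly n \<alpha> w x l)\<^sup>2
         + ode_residual (q x0) l (Ypoly n \<alpha> y x0 l) (- aquot_sum n \<alpha> y' x0 l)
             (- aquot_sum n \<alpha> y'' x0 l) (Wpoly n \<alpha> w x0 l)"
proof (rule exI[of _ "\<lambda>x. - aquot_sum n \<alpha> y' x l"], rule exI[of _ "\<lambda>x. - aquot_sum n \<alpha> y'' x l"],
    intro ballI conjI)
  fix x assume x: "x \<in> U"
  show "((\<lambda>x. Ypoly n \<alpha> y x l) has_field_derivative - aquot_sum n \<alpha> y' x l) (at x)"
    using dy x by (intro has_field_derivative_Ypoly)
  show "((\<lambda>x. - aquot_sum n \<alpha> y' x l) has_field_derivative - aquot_sum n \<alpha> y'' x l) (at x)"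
    using ddy x by (intro DERIV_minus has_field_derivative_aquot_sum)
  show "((\<lambda>x. Wpoly n \<alpha> w x l) has_field_derivative 2 * Ypoly n \<alpha> y x l) (at x)"
    using dw x by (intro has_field_derivative_Wpoly)
  show "2 * Ypoly n \<alpha> y x l * - aquot_sum n \<alpha> y'' x l
      = (- aquot_sum n \<alpha> y' x l)\<^sup>2 + 4 * (q x - l) * (Ypoly n \<alpha> y x l)\<^sup>2 - (Wpoly n \<alpha> w x l)\<^sup>2
        + ode_residual (q x0) l (Ypoly n \<alpha> y x0 l) (- aquot_sum n \<alpha> y' x0 l)
            (- aquot_sum n \<alpha> y'' x0 l) (Wpoly n \<alpha> w x0 l)"
    using combination_ode_residual_constant[OF x x0, of l] by (simp add: ode_residual_eq_iff)
qed

end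

theorem theorem1:
  fixes n :: nat and \<alpha> :: "nat \<Rightarrow> complex" and U :: "complex set"
    and y y' y'' w :: "nat \<Rightarrow> complex \<Rightarrow> complex"
    and q :: "complex \<Rightarrow> complex"
  assumes n: "n \<ge> 1"
    and distinct: "inj_on \<alpha> {..<n}"
    and U: "open U" "connected U" "U \<noteq> {}"
    and q_def: "\<And>x. q x = x\<^sup>2 - 2 * (\<Sum>i<n. y i x)"
    and dy: "\<And>i x. i < n \<Longrightarrow> x \<in> U \<Longrightarrow> (y i has_field_derivative y' i x) (at x)"
    and ddy: "\<And>i x. i < n \<Longrightarrow> x \<in> U \<Longrightarrow> (y' i has_field_derivative y'' i x) (at x)"
    and dw: "\<And>i x. i < n \<Longrightarrow> x \<in> U \<Longrightarrow> (w i has_field_derivative 2 * y i x) (at x)"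
    and eq: "\<And>i x. i < n \<Longrightarrow> x \<in> U \<Longrightarrow>
       2 * y i x * y'' i x = (y' i x)\<^sup>2 + 4 * (q x - \<alpha> i) * (y i x)\<^sup>2 - (w i x)\<^sup>2"
    and nonzero: "\<And>i. i < n \<Longrightarrow> \<exists>x\<in>U. y i x \<noteq> 0"
  shows "\<exists>\<beta> :: nat \<Rightarrow> complex.
     (\<Sum>i<n. \<alpha> i) = (\<Sum>i<n+1. \<beta> i) \<and>
     (\<forall>l. \<exists>Y' Y'' :: complex \<Rightarrow> complex. \<forall>x\<in>U.
        ((\<lambda>x. Ypoly n \<alpha> y x l) has_field_derivative Y' x) (at x) \<and>
        (Y' has_field_derivative Y'' x) (at x) \<and>
        ((\<lambda>x. Wpoly n \<alpha> w x l) has_field_derivative 2 * Ypoly n \<alpha> y x l) (at x) \<and>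
        2 * Ypoly n \<alpha> y x l * Y'' x
          = (Y' x)\<^sup>2 + 4 * (q x - l) * (Ypoly n \<alpha> y x l)\<^sup>2 - (Wpoly n \<alpha> w x l)\<^sup>2
            + 4 * apoly n \<alpha> l * (\<Prod>j<n+1. l - \<beta> j))"
proof -
  obtain x0 where x0: "x0 \<in> U"
    using U(3) by blast
  have dq: "(q has_field_derivative 2 * x - 2 * (\<Sum>i<n. y' i x)) (at x)" if "x \<in> U" for x
    unfolding q_def[abs_def] using dy that
    by (auto intro!: derivative_eq_intros simp: sum_distrib_left mult.commute)
  have res: "ode_residual (q x) (\<alpha> i) (y i x) (y' i x) (y'' i x) (w i x) = 0" if "i < n" "x \<in> U" for i x
    using eq[OF that] by (simp add: ode_residual_eq_iff)
  have dddy: "(y'' i has_field_derivative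
      2 * (2 * x - 2 * (\<Sum>j<n. y' j x)) * y i x + 4 * (q x - \<alpha> i) * y' i x - 2 * w i x) (at x)"
    if "i < n" "x \<in> U" for i x
    using that by (intro ode_third_derivative[OF U(1,2) nonzero]) (simp_all add: dy ddy dw dq res)
  obtain \<beta> where "(\<Sum>i<n. \<alpha> i) = (\<Sum>j<n+1. \<beta> j)"
    and "\<And>l. ode_residual (q x0) l (Ypoly n \<alpha> y x0 l) (- aquot_sum n \<alpha> y' x0 l)
                 (- aquot_sum n \<alpha> y'' x0 l) (Wpoly n \<alpha> w x0 l)
               = 4 * apoly n \<alpha> l * (\<Prod>j<n+1. l - \<beta> j)"
    using ode_residual_combination_factor[where y = y and x = x0, OF n distinct q_def] res x0
    by blast
  with combination_solves_ode[OF U(1,2) dq dy ddy dw dddy x0] show ?thesis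
    by metis
qed

end
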